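(* Let $(W,M)$ be a reachable Kripke structure over an $\mathsf{HFOL}$ signature $\Delta$. Let $(W,N)$ be a Kripke structure obtained from $(W,M)$ by (a) replacing unreachable elements of flexible sorts by some new elements, (b) preserving the interpretation of function and relation symbols on the elements inherited from $(W,M)$, and (c) interpreting function symbols arbitrarily on the new arguments. Then $(W,M)\equiv(W,N)$, i.e. $(W,M)\models\varphi$ iff $(W,N)\models\varphi$ for all $\Delta$-sentences $\varphi$.
   Context: Hybrid first-order logic with rigid symbols ($\mathsf{HFOL}$). A signature is $\Delta=(\Sigma^{\mathtt n},\Sigma^{\mathtt r}\subseteq\Sigma)$ with $\Sigma=(S,F,P)$ a many-sorted first-order signature, $\Sigma^{\mathtt r}\subseteq\Sigma$ the rigid symbols, and $\Sigma^{\mathtt n}$ single-sorted (sort $\mathtt n$) with constants $F^{\mathtt n}$ (nominals) and unary/binary relations (modalities); sorts of $S\setminus S^{\mathtt r}$ are flexible. A Kripke structure $(W,M)$: a $\Sigma^{\mathtt n}$-structure $W$ with nonempty world set $|W|$ and $\Sigma$-structures $M_w$ all with the same reduct to $\Sigma^{\mathtt r}$. Hybrid terms use $\Sigma$-symbols and symbols $@_k\sigma$ ($k$ nominal, $\sigma$ flexible; $@_k x=x$ for rigid $x$), with $M_{w,(@_k\sigma)(t)}=M_{W_k,\sigma}(M_{w,t})$; rigid hybrid terms are built only from $@_k\sigma$-symbols and have sort $@_k s$. Sentences: atoms $k$, $\varrho$, $t_1=t_2$, $\varpi(t)$ (hybrid terms), closed under $@_k$, $\neg$, finite $\vee$, $\downarrow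 z$ (store, $z$ nominal variable), $\exists X$ ($X$ variables of rigid sorts or of sort $\mathtt n$), $\langle\lambda\rangle$ (binary modality), with the standard local Kripke semantics; $(W,M)\models\varphi$ (global) means $\varphi$ holds at all worlds. An element $e\in M_{w,s}$ is reachable if $w=W_k$ and $e=M_{w,t}$ for some nominal $k$ and rigid hybrid term $t$ of sort $@_k s$. $(W,M)$ is reachable if every world is the denotation of a nominal and every element of a rigid sort is the denotation of a rigid hybrid term. *)

theory Defs
  imports Main
begin

text \<open>A signature Delta = (Sigma^n, Sigma^r \<subseteq> Sigma).  Sigma = (S,F,P) is many-sorted;
  a function symbol carries its arity and result sort (overloaded symbols are
  encoded by distinct elements of the symbol type).\<close>

record ('s,'f,'p,'k,'r,'l) hsig =
  Srt   :: "'s set"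
  RSrt  :: "'s set"
  Fun   :: "'f set"
  RFun  :: "'f set"
  arity :: "'f \<Rightarrow> 's list"
  res   :: "'f \<Rightarrow> 's"
  Pred  :: "'p set"
  RPred :: "'p set"
  parity :: "'p \<Rightarrow> 's list"
  Nom   :: "'k set"
  Prop  :: "'r set"
  Mdl   :: "'l set"

definition wf_hsig :: "('s,'f,'p,'k,'r,'l) hsig \<Rightarrow> bool" where
  "wf_hsig D \<longleftrightarrow>
     RSrt D \<subseteq> Srt D \<and> RFun D \<subseteq> Fun D \<and> RPred D \<subseteq> Pred D \<and>
     (\<forall>\<sigma>\<in>Fun D. set (arity D \<sigma>) \<subseteq> Srt D \<and> res D \<sigma> \<in> Srt D) \<and>
     (\<forall>\<pi>\<in>Pred D. set (parity D \<pi>) \<subseteq> Srt D) \<and>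
     (\<forall>\<sigma>\<in>RFun D. set (arity D \<sigma>) \<subseteq> RSrt D \<and> res D \<sigma> \<in> RSrt D) \<and>
     (\<forall>\<pi>\<in>RPred D. set (parity D \<pi>) \<subseteq> RSrt D)"

record ('k,'r,'l,'w) nstruct =
  Wor :: "'w set"
  nom :: "'k \<Rightarrow> 'w"
  prp :: "'r \<Rightarrow> 'w set"
  acc :: "'l \<Rightarrow> ('w \<times> 'w) set"

record ('s,'f,'p,'u) fstruct =
  car  :: "'s \<Rightarrow> 'u set"
  fint :: "'f \<Rightarrow> 'u list \<Rightarrow> 'u"
  pint :: "'p \<Rightarrow> 'u list set"

definition args_in :: "('s \<Rightarrow> 'u set) \<Rightarrow> 'u list \<Rightarrow> 's list \<Rightarrow> bool" where
  "args_in C as ss \<longleftrightarrow> list_all2 (\<lambda>a s. a \<in> C s) as ss"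

definition sig_struct :: "('s,'f,'p,'k,'r,'l) hsig \<Rightarrow> ('s,'f,'p,'u) fstruct \<Rightarrow> bool" where
  "sig_struct D A \<longleftrightarrow>
     (\<forall>\<sigma>\<in>Fun D. \<forall>as. args_in (car A) as (arity D \<sigma>) \<longrightarrow> fint A \<sigma> as \<in> car A (res D \<sigma>)) \<and>
     (\<forall>\<pi>\<in>Pred D. \<forall>as\<in>pint A \<pi>. args_in (car A) as (parity D \<pi>))"

definition kripke :: "('s,'f,'p,'k,'r,'l) hsig \<Rightarrow> ('k,'r,'l,'w) nstruct
                      \<Rightarrow> ('w \<Rightarrow> ('s,'f,'p,'u) fstruct) \<Rightarrow> bool" where
  "kripke D W M \<longleftrightarrow>
     Wor W \<noteq> {} \<and>
     (\<forall>k\<in>Nom D. nom W k \<in> Wor W) \<and>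
     (\<forall>\<rho>\<in>Prop D. prp W \<rho> \<subseteq> Wor W) \<and>
     (\<forall>lm\<in>Mdl D. acc W lm \<subseteq> Wor W \<times> Wor W) \<and>
     (\<forall>w\<in>Wor W. sig_struct D (M w)) \<and>
     (\<forall>w\<in>Wor W. \<forall>w'\<in>Wor W.
        (\<forall>s\<in>RSrt D. car (M w) s = car (M w') s) \<and>
        (\<forall>\<sigma>\<in>RFun D. \<forall>as. args_in (car (M w)) as (arity D \<sigma>) \<longrightarrow>
             fint (M w) \<sigma> as = fint (M w') \<sigma> as) \<and>
        (\<forall>\<pi>\<in>RPred D. pint (M w) \<pi> = pint (M w') \<pi>))"

datatype ('k,'v) nterm = NC 'k | NV 'v

text \<open>Hybrid terms: variables (of rigid sorts), Sigma-function symbols applied at the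
  current world, and symbols  at_k sigma  for flexible sigma.\<close>
datatype ('f,'k,'v,'s) htrm =
    Var 'v 's
  | Fn 'f "('f,'k,'v,'s) htrm list"
  | AtFn "('k,'v) nterm" 'f "('f,'k,'v,'s) htrm list"

text \<open>Sorts of hybrid terms: an ordinary sort s, or  at_k s  (for flexible s).\<close>
datatype ('s,'k,'v) hsrt = Here 's | There "('k,'v) nterm" 's

definition srt_at :: "('s,'f,'p,'k,'r,'l) hsig \<Rightarrow> ('k,'v) nterm \<Rightarrow> 's \<Rightarrow> ('s,'k,'v) hsrt" where
  "srt_at D k s = (if s \<in> RSrt D then Here s else There k s)"

fun nterm_ok :: "('s,'f,'p,'k,'r,'l) hsig \<Rightarrow> ('k,'v) nterm \<Rightarrow> bool" where
  "nterm_ok D (NC k) = (k \<in> Nom D)"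
| "nterm_ok D (NV z) = True"

fun tsort :: "('s,'f,'p,'k,'r,'l) hsig \<Rightarrow> ('f,'k,'v,'s) htrm \<Rightarrow> ('s,'k,'v) hsrt option" where
  "tsort D (Var x s) = (if s \<in> RSrt D then Some (Here s) else None)"
| "tsort D (Fn \<sigma> ts) =
     (if \<sigma> \<in> Fun D \<and> map (tsort D) ts = map (\<lambda>s. Some (Here s)) (arity D \<sigma>)
      then Some (Here (res D \<sigma>)) else None)"
| "tsort D (AtFn k \<sigma> ts) =
     (if \<sigma> \<in> Fun D - RFun D \<and> nterm_ok D k \<and>
         map (tsort D) ts = map (\<lambda>s. Some (srt_at D k s)) (arity D \<sigma>)
      then Some (srt_at D k (res D \<sigma>)) else None)"

text \<open>Rigid hybrid terms: ground terms built only from symbols at_k sigma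
  (with at_k sigma = sigma for rigid sigma) and nominal constants.\<close>
fun rigid_trm :: "('s,'f,'p,'k,'r,'l) hsig \<Rightarrow> ('f,'k,'v,'s) htrm \<Rightarrow> bool" where
  "rigid_trm D (Var x s) = False"
| "rigid_trm D (Fn \<sigma> ts) = (\<sigma> \<in> RFun D \<and> (\<forall>t\<in>set ts. rigid_trm D t))"
| "rigid_trm D (AtFn k \<sigma> ts) = ((\<exists>c. k = NC c) \<and> (\<forall>t\<in>set ts. rigid_trm D t))"

datatype ('f,'p,'k,'r,'l,'v,'s) hfm =
    NomA "('k,'v) nterm"
  | PropA 'r
  | Eq "('f,'k,'v,'s) htrm" "('f,'k,'v,'s) htrm"
  | PredA 'p "('f,'k,'v,'s) htrm list"
  | AtPredA "('k,'v) nterm" 'p "('f,'k,'v,'s) htrm list"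
  | AtF "('k,'v) nterm" "('f,'p,'k,'r,'l,'v,'s) hfm"
  | Neg "('f,'p,'k,'r,'l,'v,'s) hfm"
  | Disj "('f,'p,'k,'r,'l,'v,'s) hfm list"
  | Store 'v "('f,'p,'k,'r,'l,'v,'s) hfm"
  | ExN 'v "('f,'p,'k,'r,'l,'v,'s) hfm"
  | ExV 'v 's "('f,'p,'k,'r,'l,'v,'s) hfm"
  | Dia 'l "('f,'p,'k,'r,'l,'v,'s) hfm"

fun wf_fm :: "('s,'f,'p,'k,'r,'l) hsig \<Rightarrow> ('f,'p,'k,'r,'l,'v,'s) hfm \<Rightarrow> bool" where
  "wf_fm D (NomA k) = nterm_ok D k"
| "wf_fm D (PropA \<rho>) = (\<rho> \<in> Prop D)"
| "wf_fm D (Eq t1 t2) = (tsort D t1 \<noteq> None \<and> tsort D t1 = tsort D t2)"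
| "wf_fm D (PredA \<pi> ts) = (\<pi> \<in> Pred D \<and> map (tsort D) ts = map (\<lambda>s. Some (Here s)) (parity D \<pi>))"
| "wf_fm D (AtPredA k \<pi> ts) = (\<pi> \<in> Pred D - RPred D \<and> nterm_ok D k \<and>
       map (tsort D) ts = map (\<lambda>s. Some (srt_at D k s)) (parity D \<pi>))"
| "wf_fm D (AtF k \<phi>) = (nterm_ok D k \<and> wf_fm D \<phi>)"
| "wf_fm D (Neg \<phi>) = wf_fm D \<phi>"
| "wf_fm D (Disj \<phi>s) = (\<forall>\<phi>\<in>set \<phi>s. wf_fm D \<phi>)"
| "wf_fm D (Store z \<phi>) = wf_fm D \<phi>"
| "wf_fm D (ExN z \<phi>) = wf_fm D \<phi>"
| "wf_fm D (ExV x s \<phi>) = (s \<in> RSrt D \<and> wf_fm D \<phi>)"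
| "wf_fm D (Dia lm \<phi>) = (lm \<in> Mdl D \<and> wf_fm D \<phi>)"

fun fvn_nt :: "('k,'v) nterm \<Rightarrow> 'v set" where
  "fvn_nt (NC k) = {}"
| "fvn_nt (NV z) = {z}"

fun fvn_t :: "('f,'k,'v,'s) htrm \<Rightarrow> 'v set" where
  "fvn_t (Var x s) = {}"
| "fvn_t (Fn \<sigma> ts) = (\<Union>t\<in>set ts. fvn_t t)"
| "fvn_t (AtFn k \<sigma> ts) = fvn_nt k \<union> (\<Union>t\<in>set ts. fvn_t t)"

fun fve_t :: "('f,'k,'v,'s) htrm \<Rightarrow> ('v \<times> 's) set" where
  "fve_t (Var x s) = {(x, s)}"
| "fve_t (Fn \<sigma> ts) = (\<Union>t\<in>set ts. fve_t t)"
| "fve_t (AtFn k \<sigma> ts) = (\<Union>t\<in>set ts. fve_t t)"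

fun fvn :: "('f,'p,'k,'r,'l,'v,'s) hfm \<Rightarrow> 'v set" where
  "fvn (NomA k) = fvn_nt k"
| "fvn (PropA \<rho>) = {}"
| "fvn (Eq t1 t2) = fvn_t t1 \<union> fvn_t t2"
| "fvn (PredA \<pi> ts) = (\<Union>t\<in>set ts. fvn_t t)"
| "fvn (AtPredA k \<pi> ts) = fvn_nt k \<union> (\<Union>t\<in>set ts. fvn_t t)"
| "fvn (AtF k \<phi>) = fvn_nt k \<union> fvn \<phi>"
| "fvn (Neg \<phi>) = fvn \<phi>"
| "fvn (Disj \<phi>s) = (\<Union>\<phi>\<in>set \<phi>s. fvn \<phi>)"
| "fvn (Store z \<phi>) = fvn \<phi> - {z}"
| "fvn (ExN z \<phi>) = fvn \<phi> - {z}"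
| "fvn (ExV x s \<phi>) = fvn \<phi>"
| "fvn (Dia lm \<phi>) = fvn \<phi>"

fun fve :: "('f,'p,'k,'r,'l,'v,'s) hfm \<Rightarrow> ('v \<times> 's) set" where
  "fve (NomA k) = {}"
| "fve (PropA \<rho>) = {}"
| "fve (Eq t1 t2) = fve_t t1 \<union> fve_t t2"
| "fve (PredA \<pi> ts) = (\<Union>t\<in>set ts. fve_t t)"
| "fve (AtPredA k \<pi> ts) = (\<Union>t\<in>set ts. fve_t t)"
| "fve (AtF k \<phi>) = fve \<phi>"
| "fve (Neg \<phi>) = fve \<phi>"
| "fve (Disj \<phi>s) = (\<Union>\<phi>\<in>set \<phi>s. fve \<phi>)"
| "fve (Store z \<phi>) = fve \<phi>"
| "fve (ExN z \<phi>) = fve \<phi>"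
| "fve (ExV x s \<phi>) = fve \<phi> - {(x, s)}"
| "fve (Dia lm \<phi>) = fve \<phi>"

definition sentence :: "('s,'f,'p,'k,'r,'l) hsig \<Rightarrow> ('f,'p,'k,'r,'l,'v,'s) hfm \<Rightarrow> bool" where
  "sentence D \<phi> \<longleftrightarrow> wf_fm D \<phi> \<and> fvn \<phi> = {} \<and> fve \<phi> = {}"

fun nval :: "('k,'r,'l,'w) nstruct \<Rightarrow> ('v \<Rightarrow> 'w) \<Rightarrow> ('k,'v) nterm \<Rightarrow> 'w" where
  "nval W \<nu> (NC k) = nom W k"
| "nval W \<nu> (NV z) = \<nu> z"

fun eval :: "('k,'r,'l,'w) nstruct \<Rightarrow> ('w \<Rightarrow> ('s,'f,'p,'u) fstruct) \<Rightarrow> ('v \<Rightarrow> 'w)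
             \<Rightarrow> ('v \<times> 's \<Rightarrow> 'u) \<Rightarrow> 'w \<Rightarrow> ('f,'k,'v,'s) htrm \<Rightarrow> 'u" where
  "eval W M \<nu> \<mu> w (Var x s) = \<mu> (x, s)"
| "eval W M \<nu> \<mu> w (Fn \<sigma> ts) = fint (M w) \<sigma> (map (eval W M \<nu> \<mu> w) ts)"
| "eval W M \<nu> \<mu> w (AtFn k \<sigma> ts) = fint (M (nval W \<nu> k)) \<sigma> (map (eval W M \<nu> \<mu> w) ts)"

fun sat :: "('k,'r,'l,'w) nstruct \<Rightarrow> ('w \<Rightarrow> ('s,'f,'p,'u) fstruct) \<Rightarrow> ('v \<Rightarrow> 'w)
            \<Rightarrow> ('v \<times> 's \<Rightarrow> 'u) \<Rightarrow> 'w \<Rightarrow> ('f,'p,'k,'r,'l,'v,'s) hfm \<Rightarrow> bool" where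
  "sat W M \<nu> \<mu> w (NomA k) = (w = nval W \<nu> k)"
| "sat W M \<nu> \<mu> w (PropA \<rho>) = (w \<in> prp W \<rho>)"
| "sat W M \<nu> \<mu> w (Eq t1 t2) = (eval W M \<nu> \<mu> w t1 = eval W M \<nu> \<mu> w t2)"
| "sat W M \<nu> \<mu> w (PredA \<pi> ts) = (map (eval W M \<nu> \<mu> w) ts \<in> pint (M w) \<pi>)"
| "sat W M \<nu> \<mu> w (AtPredA k \<pi> ts) = (map (eval W M \<nu> \<mu> w) ts \<in> pint (M (nval W \<nu> k)) \<pi>)"
| "sat W M \<nu> \<mu> w (AtF k \<phi>) = sat W M \<nu> \<mu> (nval W \<nu> k) \<phi>"
| "sat W M \<nu> \<mu> w (Neg \<phi>) = (\<not> sat W M \<nu> \<mu> w \<phi>)"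
| "sat W M \<nu> \<mu> w (Disj \<phi>s) = (\<exists>\<phi>\<in>set \<phi>s. sat W M \<nu> \<mu> w \<phi>)"
| "sat W M \<nu> \<mu> w (Store z \<phi>) = sat W M (\<nu>(z := w)) \<mu> w \<phi>"
| "sat W M \<nu> \<mu> w (ExN z \<phi>) = (\<exists>v\<in>Wor W. sat W M (\<nu>(z := v)) \<mu> w \<phi>)"
| "sat W M \<nu> \<mu> w (ExV x s \<phi>) = (\<exists>a\<in>car (M w) s. sat W M \<nu> (\<mu>((x, s) := a)) w \<phi>)"
| "sat W M \<nu> \<mu> w (Dia lm \<phi>) = (\<exists>v. (w, v) \<in> acc W lm \<and> sat W M \<nu> \<mu> v \<phi>)"

text \<open>Global satisfaction of a sentence (valuations are irrelevant for sentences).\<close>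
definition models :: "('k,'r,'l,'w) nstruct \<Rightarrow> ('w \<Rightarrow> ('s,'f,'p,'u) fstruct)
                      \<Rightarrow> ('f,'p,'k,'r,'l,'v,'s) hfm \<Rightarrow> bool" where
  "models W M \<phi> \<longleftrightarrow> (\<forall>w\<in>Wor W. sat W M (\<lambda>_. undefined) (\<lambda>_. undefined) w \<phi>)"

definition reachable_el :: "('s,'f,'p,'k,'r,'l) hsig \<Rightarrow> ('k,'r,'l,'w) nstruct
      \<Rightarrow> ('w \<Rightarrow> ('s,'f,'p,'u) fstruct) \<Rightarrow> 'w \<Rightarrow> 's \<Rightarrow> 'u \<Rightarrow> bool" where
  "reachable_el D W M w s e \<longleftrightarrow>
     (\<exists>k\<in>Nom D. w = nom W k \<and>
        (\<exists>t :: ('f,'k,'k,'s) htrm. rigid_trm D t \<and> tsort D t = Some (srt_at D (NC k) s) \<and>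
             e = eval W M (\<lambda>_. undefined) (\<lambda>_. undefined) w t))"

definition reachable :: "('s,'f,'p,'k,'r,'l) hsig \<Rightarrow> ('k,'r,'l,'w) nstruct
      \<Rightarrow> ('w \<Rightarrow> ('s,'f,'p,'u) fstruct) \<Rightarrow> bool" where
  "reachable D W M \<longleftrightarrow>
     (\<forall>w\<in>Wor W. \<exists>k\<in>Nom D. nom W k = w) \<and>
     (\<forall>w\<in>Wor W. \<forall>s\<in>RSrt D. \<forall>e\<in>car (M w) s. reachable_el D W M w s e)"

definition replaces_unreachable :: "('s,'f,'p,'k,'r,'l) hsig \<Rightarrow> ('k,'r,'l,'w) nstruct
      \<Rightarrow> ('w \<Rightarrow> ('s,'f,'p,'u) fstruct) \<Rightarrow> ('w \<Rightarrow> ('s,'f,'p,'u) fstruct) \<Rightarrow> bool" where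
  "replaces_unreachable D W M N \<longleftrightarrow>
     (\<forall>w\<in>Wor W. \<forall>s\<in>RSrt D. car (N w) s = car (M w) s) \<and>
     (\<forall>w\<in>Wor W. \<forall>s\<in>Srt D - RSrt D.
        car (N w) s \<inter> car (M w) s = {e \<in> car (M w) s. reachable_el D W M w s e}) \<and>
     (\<forall>w\<in>Wor W. \<forall>\<sigma>\<in>Fun D. \<forall>as.
        args_in (\<lambda>s. car (M w) s \<inter> car (N w) s) as (arity D \<sigma>) \<longrightarrow>
        fint (N w) \<sigma> as = fint (M w) \<sigma> as) \<and>
     (\<forall>w\<in>Wor W. \<forall>\<pi>\<in>Pred D. \<forall>as.
        args_in (\<lambda>s. car (M w) s \<inter> car (N w) s) as (parity D \<pi>) \<longrightarrow>
        (as \<in> pint (N w) \<pi> \<longleftrightarrow> as \<in> pint (M w) \<pi>))"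

end

theory Submission
  imports Defs
begin

text \<open>Call an element of \<open>M\<^sub>w\<close> common if it survives in \<open>N\<^sub>w\<close>: at rigid sorts every element,
  at flexible sorts exactly the reachable ones. The common part is closed under the operations
  of \<open>M\<close>: a rigid symbol lands in a rigid carrier, and a flexible symbol \<open>\<sigma>\<close> applied to the values
  of rigid terms \<open>ts\<close>, all anchored at one nominal \<open>k\<close> of the world, yields the value of the rigid
  term \<open>@\<^sub>k\<sigma>(ts)\<close>. As \<open>N\<close> agrees with \<open>M\<close> on common arguments, every term denotes the same
  common element in both structures; since quantifiers range only over worlds and rigid
  carriers, which are shared, satisfaction of formulas agrees as well.\<close>

lemma map_eq_map_iff_list_all2:
  "map g xs = map h ys \<longleftrightarrow> list_all2 (\<lambda>x y. g x = h y) xs ys"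
  by (metis list_all2_eq list_all2_map1 list_all2_map2)

lemma list_all2_choice:
  assumes "list_all2 (\<lambda>a y. \<exists>x. R x y \<and> a = f x) as ys"
  shows "\<exists>xs. list_all2 R xs ys \<and> as = map f xs"
  using assms
proof (induction rule: list_all2_induct)
  case (Cons a as y ys)
  then obtain x xs where "R x y" "a = f x" "list_all2 R xs ys" "as = map f xs"
    by blast
  then show ?case
    by (intro exI[of _ "x # xs"]) simp
qed simp

lemma list_all2_map_eq_args_in:
  assumes "list_all2 (\<lambda>x s. f x = g x \<and> g x \<in> C s) xs ss"
  shows "map f xs = map g xs" and "args_in C (map g xs) ss"
  using assms by (induction rule: list_all2_induct) (simp_all add: args_in_def)

fun rename_nterm :: "('k \<Rightarrow> 'k) \<Rightarrow> ('k,'v) nterm \<Rightarrow> ('k,'v) nterm" where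
  "rename_nterm g (NC c) = NC (g c)"
| "rename_nterm g (NV z) = NV z"

fun rename_hsrt :: "('k \<Rightarrow> 'k) \<Rightarrow> ('s,'k,'v) hsrt \<Rightarrow> ('s,'k,'v) hsrt" where
  "rename_hsrt g (Here s) = Here s"
| "rename_hsrt g (There k s) = There (rename_nterm g k) s"

fun rename_nominals :: "('k \<Rightarrow> 'k) \<Rightarrow> ('f,'k,'v,'s) htrm \<Rightarrow> ('f,'k,'v,'s) htrm" where
  "rename_nominals g (Var x s) = Var x s"
| "rename_nominals g (Fn \<sigma> ts) = Fn \<sigma> (map (rename_nominals g) ts)"
| "rename_nominals g (AtFn k \<sigma> ts) = AtFn (rename_nterm g k) \<sigma> (map (rename_nominals g) ts)"

lemma rigid_trm_rename_nominals:
  "rigid_trm D (rename_nominals g t) = rigid_trm D t"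
proof (induction t)
  case (AtFn k \<sigma> ts)
  then show ?case by (cases k) auto
qed auto

lemma srt_at_rename_nterm:
  "srt_at D (rename_nterm g k) s = rename_hsrt g (srt_at D k s)"
  by (simp add: srt_at_def)

lemma tsort_rename_nominals:
  assumes "g ` Nom D \<subseteq> Nom D"
  shows "tsort D t = Some \<tau> \<Longrightarrow> tsort D (rename_nominals g t) = Some (rename_hsrt g \<tau>)"
proof (induction t arbitrary: \<tau>)
  case (Var x s)
  then show ?case by (auto split: if_splits)
next
  case (Fn \<sigma> ts)
  have "\<sigma> \<in> Fun D" "\<tau> = Here (res D \<sigma>)"
    and sorts: "list_all2 (\<lambda>t s. tsort D t = Some (Here s)) ts (arity D \<sigma>)"
    using Fn.prems by (auto simp: map_eq_map_iff_list_all2 split: if_splits)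
  moreover from sorts
  have "list_all2 (\<lambda>t s. tsort D (rename_nominals g t) = Some (Here s)) ts (arity D \<sigma>)"
    by (rule list.rel_mono_strong) (simp add: Fn.IH)
  ultimately show ?case
    by (simp add: map_eq_map_iff_list_all2)
next
  case (AtFn k \<sigma> ts)
  have "\<sigma> \<in> Fun D - RFun D" "nterm_ok D k" "\<tau> = srt_at D k (res D \<sigma>)"
    and sorts: "list_all2 (\<lambda>t s. tsort D t = Some (srt_at D k s)) ts (arity D \<sigma>)"
    using AtFn.prems by (auto simp: map_eq_map_iff_list_all2 split: if_splits)
  moreover from sorts
  have "list_all2 (\<lambda>t s. tsort D (rename_nominals g t) = Some (srt_at D (rename_nterm g k) s))
      ts (arity D \<sigma>)"
    by (rule list.rel_mono_strong) (simp add: AtFn.IH srt_at_rename_nterm)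
  moreover have "nterm_ok D (rename_nterm g k)"
    using \<open>nterm_ok D k\<close> assms by (cases k) auto
  ultimately show ?case
    by (simp add: map_eq_map_iff_list_all2 srt_at_rename_nterm)
qed

lemma eval_rename_nominals:
  assumes "\<And>c. nom W (g c) = nom W c"
  shows "eval W M \<nu> \<mu> w (rename_nominals g t) = eval W M \<nu> \<mu> w t"
proof (induction t)
  case (AtFn k \<sigma> ts)
  then show ?case using assms by (cases k) (simp_all cong: map_cong)
qed (simp_all cong: map_cong)

lemma reachable_el_iff:
  assumes "k \<in> Nom D"
  shows "reachable_el D W M (nom W k) s e \<longleftrightarrow>
    (\<exists>t :: ('f,'k,'k,'s) htrm. rigid_trm D t \<and> tsort D t = Some (srt_at D (NC k) s) \<and>
       e = eval W M (\<lambda>_. undefined) (\<lambda>_. undefined) (nom W k) t)"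
proof
  assume "reachable_el D W M (nom W k) s e"
  then obtain k' and t :: "('f,'k,'k,'s) htrm" where "k' \<in> Nom D" "nom W k' = nom W k"
    and t: "rigid_trm D t" "tsort D t = Some (srt_at D (NC k') s)"
      "e = eval W M (\<lambda>_. undefined) (\<lambda>_. undefined) (nom W k) t"
    unfolding reachable_el_def by metis
  \<comment> \<open>Re-anchor the witness: \<open>k'\<close> and \<open>k\<close> name the same world.\<close>
  define g where "g = id(k' := k)"
  have "g ` Nom D \<subseteq> Nom D" "\<And>c. nom W (g c) = nom W c" "rename_nterm g (NC k') = NC k"
    using assms \<open>nom W k' = nom W k\<close> by (auto simp: g_def)
  then show "\<exists>t :: ('f,'k,'k,'s) htrm. rigid_trm D t \<and> tsort D t = Some (srt_at D (NC k) s) \<and>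
       e = eval W M (\<lambda>_. undefined) (\<lambda>_. undefined) (nom W k) t"
    using t rigid_trm_rename_nominals tsort_rename_nominals eval_rename_nominals srt_at_rename_nterm
    by metis
next
  assume "\<exists>t :: ('f,'k,'k,'s) htrm. rigid_trm D t \<and> tsort D t = Some (srt_at D (NC k) s) \<and>
       e = eval W M (\<lambda>_. undefined) (\<lambda>_. undefined) (nom W k) t"
  then show "reachable_el D W M (nom W k) s e"
    using assms unfolding reachable_el_def by blast
qed

lemma reachable_el_fint:
  fixes D :: "('s,'f,'p,'k,'r,'l) hsig" and M :: "'w \<Rightarrow> ('s,'f,'p,'u) fstruct"
  assumes "\<sigma> \<in> Fun D - RFun D" and "k \<in> Nom D"
    and "args_in (\<lambda>s. Collect (reachable_el D W M (nom W k) s)) as (arity D \<sigma>)"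
  shows "reachable_el D W M (nom W k) (res D \<sigma>) (fint (M (nom W k)) \<sigma> as)"
proof -
  let ?ev = "eval W M (\<lambda>_. undefined) (\<lambda>_. undefined) (nom W k)"
  let ?typed = "\<lambda>(t :: ('f,'k,'k,'s) htrm) s. rigid_trm D t \<and> tsort D t = Some (srt_at D (NC k) s)"
  have "list_all2 (\<lambda>a s. \<exists>t. ?typed t s \<and> a = ?ev t) as (arity D \<sigma>)"
    using assms(3) unfolding args_in_def
    by (rule list.rel_mono_strong) (simp add: reachable_el_iff[OF assms(2)])
  from list_all2_choice[OF this]
  obtain ts where ts: "list_all2 ?typed ts (arity D \<sigma>)" and as: "as = map ?ev ts"
    by blast
  have "\<forall>t\<in>set ts. rigid_trm D t"
    using ts by (metis (no_types, lifting) list_all2_conv_all_nth in_set_conv_nth)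
  have "map (tsort D) ts = map (\<lambda>s. Some (srt_at D (NC k) s)) (arity D \<sigma>)"
    unfolding map_eq_map_iff_list_all2 using ts by (rule list_all2_mono) simp
  then have "tsort D (AtFn (NC k) \<sigma> ts) = Some (srt_at D (NC k) (res D \<sigma>))"
    using assms(1,2) by simp
  moreover have "rigid_trm D (AtFn (NC k) \<sigma> ts)"
    using \<open>\<forall>t\<in>set ts. rigid_trm D t\<close> by simp
  moreover have "fint (M (nom W k)) \<sigma> as = ?ev (AtFn (NC k) \<sigma> ts)"
    using as by simp
  ultimately show ?thesis
    unfolding reachable_el_iff[OF assms(2)] by blast
qed

lemma nval_in_Wor:
  assumes "kripke D W M" and "nterm_ok D k" and "\<forall>z\<in>fvn_nt k. \<nu> z \<in> Wor W"
  shows "nval W \<nu> k \<in> Wor W"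
  using assms by (cases k) (auto simp: kripke_def)

locale unreachable_replacement =
  fixes D :: "('s,'f,'p,'k,'r,'l) hsig"
    and W :: "('k,'r,'l,'w) nstruct"
    and M N :: "'w \<Rightarrow> ('s,'f,'p,'u) fstruct"
  assumes wf: "wf_hsig D"
    and kripke_M: "kripke D W M"
    and reachable_M: "reachable D W M"
    and replaces: "replaces_unreachable D W M N"
begin

definition common :: "'w \<Rightarrow> 's \<Rightarrow> 'u set" where
  "common w s = car (M w) s \<inter> car (N w) s"

lemma common_rigid:
  assumes "s \<in> RSrt D" and "w \<in> Wor W"
  shows "common w s = car (M w) s"
  using replaces assms unfolding replaces_unreachable_def common_def by auto

lemma car_rigid_world_indep:
  assumes "s \<in> RSrt D" and "w \<in> Wor W" and "w' \<in> Wor W"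
  shows "car (M w) s = car (M w') s"
  using kripke_M assms unfolding kripke_def by blast

lemma car_N_rigid:
  assumes "s \<in> RSrt D" and "w \<in> Wor W"
  shows "car (N w) s = car (M w) s"
  using replaces assms unfolding replaces_unreachable_def by blast

lemma common_rigid_world_indep:
  assumes "s \<in> RSrt D" and "w \<in> Wor W" and "w' \<in> Wor W"
  shows "common w s = common w' s"
  using assms by (metis car_rigid_world_indep common_rigid)

lemma common_flexible:
  assumes "s \<in> Srt D - RSrt D" and "w \<in> Wor W"
  shows "common w s = {e \<in> car (M w) s. reachable_el D W M w s e}"
proof -
  have "car (N w) s \<inter> car (M w) s = {e \<in> car (M w) s. reachable_el D W M w s e}"
    using replaces assms unfolding replaces_unreachable_def by blast
  then show ?thesis
    by (simp add: common_def Int_commute)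
qed

lemma common_reachable:
  assumes "w \<in> Wor W" and "s \<in> Srt D" and "a \<in> common w s"
  shows "reachable_el D W M w s a"
proof (cases "s \<in> RSrt D")
  case True
  then show ?thesis
    using reachable_M assms by (auto simp: reachable_def common_rigid)
next
  case False
  then show ?thesis
    using assms by (simp add: common_flexible)
qed

lemma fint_common:
  assumes "w \<in> Wor W" and "\<sigma> \<in> Fun D" and "args_in (common w) as (arity D \<sigma>)"
  shows "fint (M w) \<sigma> as \<in> common w (res D \<sigma>)"
proof -
  have "args_in (car (M w)) as (arity D \<sigma>)"
    using assms(3) unfolding args_in_def common_def by (auto elim: list_all2_mono)
  then have in_M: "fint (M w) \<sigma> as \<in> car (M w) (res D \<sigma>)"
    using kripke_M assms(1,2) unfolding kripke_def sig_struct_def by blast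
  show ?thesis
  proof (cases "res D \<sigma> \<in> RSrt D")
    case True
    then show ?thesis
      using in_M assms(1) by (simp add: common_rigid)
  next
    case False
    then have "\<sigma> \<in> Fun D - RFun D" and "res D \<sigma> \<in> Srt D - RSrt D"
      and arity_sorts: "set (arity D \<sigma>) \<subseteq> Srt D"
      using wf assms(2) unfolding wf_hsig_def by blast+
    obtain k where k: "k \<in> Nom D" "nom W k = w"
      using reachable_M assms(1) unfolding reachable_def by blast
    have "args_in (\<lambda>s. Collect (reachable_el D W M (nom W k) s)) as (arity D \<sigma>)"
      using assms(3) unfolding args_in_def
      by (rule list.rel_mono_strong) (use assms(1) k(2) arity_sorts common_reachable in blast)
    then have "reachable_el D W M w (res D \<sigma>) (fint (M w) \<sigma> as)"
      using reachable_el_fint[OF \<open>\<sigma> \<in> Fun D - RFun D\<close> k(1)] k(2) by blast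
    then show ?thesis
      using in_M assms(1) \<open>res D \<sigma> \<in> Srt D - RSrt D\<close> by (simp add: common_flexible)
  qed
qed

lemma fint_N_common:
  assumes "w \<in> Wor W" and "\<sigma> \<in> Fun D" and "args_in (common w) as (arity D \<sigma>)"
  shows "fint (N w) \<sigma> as = fint (M w) \<sigma> as"
proof -
  have "args_in (\<lambda>s. car (M w) s \<inter> car (N w) s) as (arity D \<sigma>)"
    using assms(3) by (simp add: common_def[abs_def])
  moreover have "\<forall>w\<in>Wor W. \<forall>\<sigma>\<in>Fun D. \<forall>as. args_in (\<lambda>s. car (M w) s \<inter> car (N w) s) as (arity D \<sigma>)
      \<longrightarrow> fint (N w) \<sigma> as = fint (M w) \<sigma> as"
    using replaces unfolding replaces_unreachable_def by blast
  ultimately show ?thesis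
    using assms(1,2) by blast
qed

lemma pint_N_common:
  assumes "w \<in> Wor W" and "\<pi> \<in> Pred D" and "args_in (common w) as (parity D \<pi>)"
  shows "as \<in> pint (N w) \<pi> \<longleftrightarrow> as \<in> pint (M w) \<pi>"
proof -
  have "args_in (\<lambda>s. car (M w) s \<inter> car (N w) s) as (parity D \<pi>)"
    using assms(3) by (simp add: common_def[abs_def])
  moreover have "\<forall>w\<in>Wor W. \<forall>\<pi>\<in>Pred D. \<forall>as. args_in (\<lambda>s. car (M w) s \<inter> car (N w) s) as (parity D \<pi>)
      \<longrightarrow> (as \<in> pint (N w) \<pi> \<longleftrightarrow> as \<in> pint (M w) \<pi>)"
    using replaces unfolding replaces_unreachable_def by blast
  ultimately show ?thesis
    using assms(1,2) by blast
qed

fun common_at :: "('v \<Rightarrow> 'w) \<Rightarrow> 'w \<Rightarrow> ('s,'k,'v) hsrt \<Rightarrow> 'u set" where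
  "common_at \<nu> w (Here s) = common w s"
| "common_at \<nu> w (There k s) = common (nval W \<nu> k) s"

lemma common_at_srt_at:
  assumes "w \<in> Wor W" and "nval W \<nu> k \<in> Wor W"
  shows "common_at \<nu> w (srt_at D k s) = common (nval W \<nu> k) s"
  using common_rigid_world_indep[OF _ assms] by (simp add: srt_at_def)

lemma eval_common:
  assumes "tsort D t = Some \<tau>" and "\<forall>z\<in>fvn_t t. \<nu> z \<in> Wor W"
    and "\<forall>p\<in>fve_t t. \<forall>v\<in>Wor W. \<mu> p \<in> car (M v) (snd p)" and "w \<in> Wor W"
  shows "eval W N \<nu> \<mu> w t = eval W M \<nu> \<mu> w t \<and> eval W M \<nu> \<mu> w t \<in> common_at \<nu> w \<tau>"
  using assms
proof (induction t arbitrary: \<tau>)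
  case (Var x s)
  then show ?case
    by (auto simp: common_rigid split: if_splits)
next
  case (Fn \<sigma> ts)
  have \<sigma>: "\<sigma> \<in> Fun D" and \<tau>: "\<tau> = Here (res D \<sigma>)"
    and sorts: "list_all2 (\<lambda>t s. tsort D t = Some (Here s)) ts (arity D \<sigma>)"
    using Fn.prems(1) by (auto simp: map_eq_map_iff_list_all2 split: if_splits)
  have "list_all2 (\<lambda>t s. eval W N \<nu> \<mu> w t = eval W M \<nu> \<mu> w t \<and> eval W M \<nu> \<mu> w t \<in> common w s)
      ts (arity D \<sigma>)"
    using sorts by (rule list.rel_mono_strong) (use Fn.IH Fn.prems(2-4) in fastforce)
  note args = list_all2_map_eq_args_in[OF this]
  show ?case
    using fint_common[OF Fn.prems(4) \<sigma> args(2)] fint_N_common[OF Fn.prems(4) \<sigma> args(2)] \<tau>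
    by (simp add: args(1))
next
  case (AtFn k \<sigma> ts)
  let ?w = "nval W \<nu> k"
  have \<sigma>: "\<sigma> \<in> Fun D" and k: "nterm_ok D k" and \<tau>: "\<tau> = srt_at D k (res D \<sigma>)"
    and sorts: "list_all2 (\<lambda>t s. tsort D t = Some (srt_at D k s)) ts (arity D \<sigma>)"
    using AtFn.prems(1) by (auto simp: map_eq_map_iff_list_all2 split: if_splits)
  have w': "?w \<in> Wor W"
    using nval_in_Wor[OF kripke_M k] AtFn.prems(2) by auto
  have "list_all2 (\<lambda>t s. eval W N \<nu> \<mu> w t = eval W M \<nu> \<mu> w t \<and> eval W M \<nu> \<mu> w t \<in> common ?w s)
      ts (arity D \<sigma>)"
    using sorts by (rule list.rel_mono_strong)
      (use AtFn.IH AtFn.prems(2-4) common_at_srt_at[OF AtFn.prems(4) w'] in fastforce)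
  note args = list_all2_map_eq_args_in[OF this]
  show ?case
    using fint_common[OF w' \<sigma> args(2)] fint_N_common[OF w' \<sigma> args(2)] \<tau>
      common_at_srt_at[OF AtFn.prems(4) w']
    by (simp add: args(1))
qed

lemma map_eval_common:
  assumes "list_all2 (\<lambda>t s. tsort D t = Some (f s)) ts ss"
    and "\<forall>z\<in>(\<Union>t\<in>set ts. fvn_t t). \<nu> z \<in> Wor W"
    and "\<forall>p\<in>(\<Union>t\<in>set ts. fve_t t). \<forall>v\<in>Wor W. \<mu> p \<in> car (M v) (snd p)" and "w \<in> Wor W"
  shows "list_all2 (\<lambda>t s. eval W N \<nu> \<mu> w t = eval W M \<nu> \<mu> w t \<and> eval W M \<nu> \<mu> w t \<in> common_at \<nu> w (f s))
    ts ss"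
  using assms(1) by (rule list.rel_mono_strong) (use eval_common assms(2-4) in fastforce)

lemma sat_common:
  assumes "wf_fm D \<phi>" and "\<forall>z\<in>fvn \<phi>. \<nu> z \<in> Wor W"
    and "\<forall>p\<in>fve \<phi>. \<forall>v\<in>Wor W. \<mu> p \<in> car (M v) (snd p)" and "w \<in> Wor W"
  shows "sat W N \<nu> \<mu> w \<phi> \<longleftrightarrow> sat W M \<nu> \<mu> w \<phi>"
  using assms
proof (induction \<phi> arbitrary: \<nu> \<mu> w)
  case (Eq t1 t2)
  then obtain \<tau> where \<tau>: "tsort D t1 = Some \<tau>" "tsort D t2 = Some \<tau>"
    by (cases "tsort D t1") auto
  have "eval W N \<nu> \<mu> w t1 = eval W M \<nu> \<mu> w t1"
    using eval_common[OF \<tau>(1), of \<nu> \<mu> w] Eq.prems(2-4) by auto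
  moreover have "eval W N \<nu> \<mu> w t2 = eval W M \<nu> \<mu> w t2"
    using eval_common[OF \<tau>(2), of \<nu> \<mu> w] Eq.prems(2-4) by auto
  ultimately show ?case
    by simp
next
  case (PredA \<pi> ts)
  have \<pi>: "\<pi> \<in> Pred D" and sorts: "list_all2 (\<lambda>t s. tsort D t = Some (Here s)) ts (parity D \<pi>)"
    using PredA.prems(1) by (auto simp: map_eq_map_iff_list_all2)
  from map_eval_common[OF sorts, of \<nu> \<mu> w] PredA.prems(2-4)
  have "list_all2 (\<lambda>t s. eval W N \<nu> \<mu> w t = eval W M \<nu> \<mu> w t \<and> eval W M \<nu> \<mu> w t \<in> common w s)
      ts (parity D \<pi>)"
    by simp
  note args = list_all2_map_eq_args_in[OF this]
  show ?case
    using pint_N_common[OF PredA.prems(4) \<pi> args(2)] by (simp add: args(1))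
next
  case (AtPredA k \<pi> ts)
  let ?w = "nval W \<nu> k"
  have \<pi>: "\<pi> \<in> Pred D" and k: "nterm_ok D k"
    and sorts: "list_all2 (\<lambda>t s. tsort D t = Some (srt_at D k s)) ts (parity D \<pi>)"
    using AtPredA.prems(1) by (auto simp: map_eq_map_iff_list_all2)
  have w': "?w \<in> Wor W"
    using nval_in_Wor[OF kripke_M k] AtPredA.prems(2) by auto
  from map_eval_common[OF sorts, of \<nu> \<mu> w] AtPredA.prems(2-4)
  have "list_all2 (\<lambda>t s. eval W N \<nu> \<mu> w t = eval W M \<nu> \<mu> w t \<and> eval W M \<nu> \<mu> w t \<in> common ?w s)
      ts (parity D \<pi>)"
    by (simp add: common_at_srt_at[OF AtPredA.prems(4) w'])
  note args = list_all2_map_eq_args_in[OF this]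
  show ?case
    using pint_N_common[OF w' \<pi> args(2)] by (simp add: args(1))
next
  case (AtF k \<phi>)
  have "nval W \<nu> k \<in> Wor W"
    using AtF.prems(1,2) by (intro nval_in_Wor[OF kripke_M]) auto
  then show ?case
    using AtF by auto
next
  case (Store z \<phi>)
  then show ?case
    by auto
next
  case (ExN z \<phi>)
  then show ?case
    by auto
next
  case (ExV x s \<phi>)
  then have s: "s \<in> RSrt D"
    by simp
  have "sat W N \<nu> (\<mu>((x, s) := a)) w \<phi> \<longleftrightarrow> sat W M \<nu> (\<mu>((x, s) := a)) w \<phi>"
    if "a \<in> car (M w) s" for a
  proof (rule ExV.IH)
    have "\<forall>v\<in>Wor W. a \<in> car (M v) s"
      using that car_rigid_world_indep[OF s ExV.prems(4)] by blast
    then show "\<forall>p\<in>fve \<phi>. \<forall>v\<in>Wor W. (\<mu>((x, s) := a)) p \<in> car (M v) (snd p)"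
      using ExV.prems(3) by auto
  qed (use ExV.prems in auto)
  then show ?case
    using car_N_rigid[OF s ExV.prems(4)] by auto
next
  case (Dia l \<phi>)
  have "acc W l \<subseteq> Wor W \<times> Wor W"
    using kripke_M Dia.prems(1) unfolding kripke_def by simp
  then have "sat W N \<nu> \<mu> v \<phi> \<longleftrightarrow> sat W M \<nu> \<mu> v \<phi>" if "(w, v) \<in> acc W l" for v
    using Dia.IH[of \<nu> \<mu> v] Dia.prems that by auto
  then show ?case
    by auto
qed auto

end

theorem lemma3p1:
  fixes D :: "('s,'f,'p,'k,'r,'l) hsig"
    and W :: "('k,'r,'l,'w) nstruct"
    and M N :: "'w \<Rightarrow> ('s,'f,'p,'u) fstruct"
  assumes "wf_hsig D"
    and "kripke D W M"
    and "reachable D W M"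
    and "kripke D W N"
    and "replaces_unreachable D W M N"
  shows "\<forall>\<phi> :: ('f,'p,'k,'r,'l,'v,'s) hfm. sentence D \<phi> \<longrightarrow> (models W M \<phi> \<longleftrightarrow> models W N \<phi>)"
proof (intro allI impI)
  fix \<phi> :: "('f,'p,'k,'r,'l,'v,'s) hfm"
  assume "sentence D \<phi>"
  interpret unreachable_replacement D W M N
    using assms(1-3,5) by unfold_locales
  have "sat W N (\<lambda>_. undefined) (\<lambda>_. undefined) w \<phi> \<longleftrightarrow> sat W M (\<lambda>_. undefined) (\<lambda>_. undefined) w \<phi>"
    if "w \<in> Wor W" for w
    using sat_common[of \<phi> "\<lambda>_. undefined" "\<lambda>_. undefined" w] \<open>sentence D \<phi>\<close> that
    unfolding sentence_def by simp
  then show "models W M \<phi> \<longleftrightarrow> models W N \<phi>"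
    unfolding models_def by blast
qed

end
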